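(* Let $\Sigma\subseteq\mathbb{C}$ be a nonempty compact set, let $L$ be a bounded band operator on $\ell^2(\mathbb{Z})$ with $LS=SL$, let $\gamma\in\mathbb{Z}$, and for $u\in\Sigma^{\mathbb{Z}}$ put $H(u):=L+S^\gamma M_u$. If $b,c\in\Sigma^{\mathbb{Z}}$ satisfy $\mathcal{W}(b)\subseteq\mathcal{W}(c)$, then $\nu(H(b))\ge\nu(H(c))$ and \[ \|(H(b)-\lambda)^{-1}\|\le\|(H(c)-\lambda)^{-1}\|\quad\text{for all }\lambda\in\mathbb{C}, \] so that $\sigma(H(b))\subseteq\sigma(H(c))$ and $\sigma_\varepsilon(H(b))\subseteq\sigma_\varepsilon(H(c))$ for all $\varepsilon>0$.
   Context: $(Sx)_n=x_{n-1}$ on $\ell^2(\mathbb{Z})$; $(M_ux)_n=u_nx_n$. A band operator is a finite sum $\sum_{k=-w}^{w}M_{a^{(k)}}S^k$ with $a^{(k)}\in\ell^\infty(\mathbb{Z})$. $\mathcal{W}(u)$ is the set of all finite subwords of $u$, i.e. all words $(u(k),\dots,u(k+n-1))$ with $k\in\mathbb{Z}$, $n\ge 0$. The lower norm of a bounded operator $T$ is $\nu(T):=\inf\{\|Tx\|:\|x\|=1\}$. $\sigma_\varepsilon(T):=\{\lambda:\|(T-\lambda)^{-1}\|>1/\varepsilon\}$, with the convention $\|B^{-1}\|:=\infty$ if $B$ is not invertible. *)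

theory Defs
  imports "HOL-Analysis.Analysis" "HOL-Library.Extended_Real"
begin

text \<open>Operators are maps (int => complex) => (int => complex); all operators considered here
  (band operators) are given by pointwise finite formulas and so act on all sequences.\<close>

definition l2 :: "(int \<Rightarrow> complex) \<Rightarrow> bool" where
  "l2 x \<longleftrightarrow> (\<lambda>n. (cmod (x n))\<^sup>2) summable_on UNIV"

definition l2_space :: "(int \<Rightarrow> complex) set" where
  "l2_space = {x. l2 x}"

definition l2norm :: "(int \<Rightarrow> complex) \<Rightarrow> real" where
  "l2norm x = sqrt (\<Sum>\<^sub>\<infinity>n. (cmod (x n))\<^sup>2)"

definition shift :: "(int \<Rightarrow> complex) \<Rightarrow> (int \<Rightarrow> complex)" where
  "shift x = (\<lambda>n. x (n - 1))"

definition shift_pow :: "int \<Rightarrow> (int \<Rightarrow> complex) \<Rightarrow> (int \<Rightarrow> complex)" where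
  "shift_pow k x = (\<lambda>n. x (n - k))"

definition mult_op :: "(int \<Rightarrow> complex) \<Rightarrow> (int \<Rightarrow> complex) \<Rightarrow> (int \<Rightarrow> complex)" where
  "mult_op u x = (\<lambda>n. u n * x n)"

definition band_op :: "((int \<Rightarrow> complex) \<Rightarrow> (int \<Rightarrow> complex)) \<Rightarrow> bool" where
  "band_op T \<longleftrightarrow> (\<exists>(w::nat) (a :: int \<Rightarrow> int \<Rightarrow> complex).
      (\<forall>k. bounded (range (a k))) \<and>
      T = (\<lambda>x n. \<Sum>k\<in>{- int w..int w}. mult_op (a k) (shift_pow k x) n))"

definition op_minus_scalar ::
  "((int \<Rightarrow> complex) \<Rightarrow> (int \<Rightarrow> complex)) \<Rightarrow> complex \<Rightarrow> (int \<Rightarrow> complex) \<Rightarrow> (int \<Rightarrow> complex)" where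
  "op_minus_scalar T z x = (\<lambda>n. T x n - z * x n)"

definition l2_opnorm :: "((int \<Rightarrow> complex) \<Rightarrow> (int \<Rightarrow> complex)) \<Rightarrow> real" where
  "l2_opnorm T = Sup {l2norm (T x) | x. l2 x \<and> l2norm x \<le> 1}"

definition l2_invertible :: "((int \<Rightarrow> complex) \<Rightarrow> (int \<Rightarrow> complex)) \<Rightarrow> bool" where
  "l2_invertible T \<longleftrightarrow> bij_betw T l2_space l2_space \<and>
     (\<exists>C. \<forall>x. l2 x \<longrightarrow> l2norm x \<le> C * l2norm (T x))"

definition inv_norm :: "((int \<Rightarrow> complex) \<Rightarrow> (int \<Rightarrow> complex)) \<Rightarrow> ereal" where
  "inv_norm T = (if l2_invertible T then ereal (l2_opnorm (inv_into l2_space T)) else \<infinity>)"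

definition lower_norm :: "((int \<Rightarrow> complex) \<Rightarrow> (int \<Rightarrow> complex)) \<Rightarrow> real" where
  "lower_norm T = Inf {l2norm (T x) | x. l2 x \<and> l2norm x = 1}"

definition spectrum_l2 :: "((int \<Rightarrow> complex) \<Rightarrow> (int \<Rightarrow> complex)) \<Rightarrow> complex set" where
  "spectrum_l2 T = {z. \<not> l2_invertible (op_minus_scalar T z)}"

definition pseudospectrum_l2 :: "real \<Rightarrow> ((int \<Rightarrow> complex) \<Rightarrow> (int \<Rightarrow> complex)) \<Rightarrow> complex set" where
  "pseudospectrum_l2 \<epsilon> T = {z. inv_norm (op_minus_scalar T z) > ereal (1 / \<epsilon>)}"

definition subwords :: "(int \<Rightarrow> 'a) \<Rightarrow> 'a list set" where
  "subwords u = {map (\<lambda>i. u (k + int i)) [0..<n] | k n. True}"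

definition H_op :: "((int \<Rightarrow> complex) \<Rightarrow> (int \<Rightarrow> complex)) \<Rightarrow> int \<Rightarrow> (int \<Rightarrow> complex)
     \<Rightarrow> (int \<Rightarrow> complex) \<Rightarrow> (int \<Rightarrow> complex)" where
  "H_op L \<gamma> u x = (\<lambda>n. L x n + shift_pow \<gamma> (mult_op u x) n)"

end

theory Submission imports Defs begin

(* Every finite window of b occurs somewhere in c, so a translate of c agrees with b on any
   prescribed finite window. Since x is, up to an arbitrarily small tail, supported on a window,
   H(c) applied to the corresponding translate of x is as close as we like to H(b) x; hence every
   lower bound of H(c) - z is inherited by H(b) - z. For surjectivity, solve the equations of
   H(c) - z for the translated right-hand sides, translate the solutions back and pass to a
   pointwise convergent subsequence: the operator is banded, so the limit solves the equation
   for H(b) - z, and by Fatou's lemma its norm obeys the same bound. A band operator commuting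
   with S is a convolution, so all of this applies to H(u) - z. *)

section \<open>Square-summable sequences on the integers\<close>

lemma l2I:
  assumes "\<And>F. finite F \<Longrightarrow> (\<Sum>n\<in>F. (cmod (x n))\<^sup>2) \<le> B"
  shows "l2 x"
  unfolding l2_def by (rule nonneg_bdd_above_summable_on) (auto intro!: bdd_aboveI[of _ B] assms)

lemma l2norm_nonneg: "0 \<le> l2norm x"
  unfolding l2norm_def by (rule real_sqrt_ge_zero, rule infsum_nonneg) simp

lemma l2norm_squared: "(l2norm x)\<^sup>2 = (\<Sum>\<^sub>\<infinity>n. (cmod (x n))\<^sup>2)"
  unfolding l2norm_def by (rule real_sqrt_pow2) (rule infsum_nonneg, simp)

lemma sum_le_l2norm_squared: "l2 x \<Longrightarrow> finite F \<Longrightarrow> (\<Sum>n\<in>F. (cmod (x n))\<^sup>2) \<le> (l2norm x)\<^sup>2"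
  unfolding l2norm_squared l2_def by (rule finite_sum_le_infsum) auto

lemma l2norm_leI:
  assumes "l2 x" "0 \<le> r" "\<And>F. finite F \<Longrightarrow> (\<Sum>n\<in>F. (cmod (x n))\<^sup>2) \<le> r\<^sup>2"
  shows "l2norm x \<le> r"
proof -
  have "(\<Sum>\<^sub>\<infinity>n. (cmod (x n))\<^sup>2) \<le> r\<^sup>2"
    using assms by (intro infsum_le_finite_sums) (auto simp: l2_def)
  hence "l2norm x \<le> sqrt (r\<^sup>2)" unfolding l2norm_def by (rule real_sqrt_le_mono)
  thus ?thesis using assms by simp
qed

lemma norm_le_l2norm: "l2 x \<Longrightarrow> cmod (x m) \<le> l2norm x"
  by (rule power2_le_imp_le) (use sum_le_l2norm_squared[of x "{m}"] l2norm_nonneg in simp_all)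

lemma l2_zero: "l2 (\<lambda>_. 0)"
  by (rule l2I[of _ 0]) simp

lemma l2norm_zero: "l2norm (\<lambda>_. 0) = 0"
  by (simp add: l2norm_def)

lemma shift_pow_shift_pow: "shift_pow s (shift_pow t x) = shift_pow (s + t) x"
  by (simp add: shift_pow_def algebra_simps)

lemma shift_pow_0: "shift_pow 0 x = x"
  by (simp add: shift_pow_def)

lemma bij_minus_const: "bij (\<lambda>n::int. n - t)"
  by (rule bij_betwI[of _ _ _ "\<lambda>n. n + t"]) auto

lemma l2_shift_pow_iff: "l2 (shift_pow t x) \<longleftrightarrow> l2 x"
  unfolding l2_def shift_pow_def
  using summable_on_reindex_bij_betw[OF bij_minus_const[of t], of "\<lambda>n. (cmod (x n))\<^sup>2"] by simp

lemma l2norm_shift_pow: "l2norm (shift_pow t x) = l2norm x"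
  unfolding l2norm_def shift_pow_def
  using infsum_reindex_bij_betw[OF bij_minus_const[of t], of "\<lambda>n. (cmod (x n))\<^sup>2"] by simp

lemma l2_add:
  assumes "l2 x" "l2 y"
  shows "l2 (\<lambda>n. x n + y n)"
proof (rule l2I)
  fix F :: "int set" assume F: "finite F"
  have "(\<Sum>n\<in>F. (cmod (x n + y n))\<^sup>2) \<le> (\<Sum>n\<in>F. 2 * (cmod (x n))\<^sup>2 + 2 * (cmod (y n))\<^sup>2)"
  proof (rule sum_mono)
    fix n
    have "(cmod (x n + y n))\<^sup>2 \<le> (cmod (x n) + cmod (y n))\<^sup>2"
      by (simp add: power_mono norm_triangle_ineq)
    also have "\<dots> \<le> 2 * (cmod (x n))\<^sup>2 + 2 * (cmod (y n))\<^sup>2"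
      using zero_le_power2[of "cmod (x n) - cmod (y n)"] by (simp add: power2_diff power2_sum)
    finally show "(cmod (x n + y n))\<^sup>2 \<le> 2 * (cmod (x n))\<^sup>2 + 2 * (cmod (y n))\<^sup>2" .
  qed
  also have "\<dots> \<le> 2 * (l2norm x)\<^sup>2 + 2 * (l2norm y)\<^sup>2"
    using sum_le_l2norm_squared[OF assms(1) F] sum_le_l2norm_squared[OF assms(2) F]
    by (simp add: sum.distrib sum_distrib_left[symmetric])
  finally show "(\<Sum>n\<in>F. (cmod (x n + y n))\<^sup>2) \<le> 2 * (l2norm x)\<^sup>2 + 2 * (l2norm y)\<^sup>2" .
qed

lemma sum_mult_bounded_le_l2norm:
  assumes "l2 x" "\<And>n. cmod (u n) \<le> M" "finite F"
  shows "(\<Sum>n\<in>F. (cmod (u n * x n))\<^sup>2) \<le> (M * l2norm x)\<^sup>2"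
proof -
  have "(cmod (u n * x n))\<^sup>2 \<le> M\<^sup>2 * (cmod (x n))\<^sup>2" for n
    using power_mono[OF assms(2)[of n] norm_ge_zero]
    by (simp add: norm_mult power_mult_distrib mult_right_mono)
  hence "(\<Sum>n\<in>F. (cmod (u n * x n))\<^sup>2) \<le> M\<^sup>2 * (\<Sum>n\<in>F. (cmod (x n))\<^sup>2)"
    by (simp add: sum_distrib_left sum_mono)
  also have "\<dots> \<le> M\<^sup>2 * (l2norm x)\<^sup>2"
    using sum_le_l2norm_squared[OF assms(1,3)] by (simp add: mult_left_mono)
  finally show ?thesis by (simp add: power_mult_distrib)
qed

lemma l2_mult_bounded: "l2 x \<Longrightarrow> (\<And>n. cmod (u n) \<le> M) \<Longrightarrow> l2 (\<lambda>n. u n * x n)"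
  using sum_mult_bounded_le_l2norm by (blast intro: l2I)

lemma l2norm_mult_bounded:
  assumes "l2 x" "\<And>n. cmod (u n) \<le> M"
  shows "l2norm (\<lambda>n. u n * x n) \<le> M * l2norm x"
proof (rule l2norm_leI)
  show "l2 (\<lambda>n. u n * x n)" using assms by (rule l2_mult_bounded)
  have "0 \<le> M" using norm_ge_zero assms(2)[of 0] by (rule order_trans)
  thus "0 \<le> M * l2norm x" by (simp add: l2norm_nonneg)
qed (use assms sum_mult_bounded_le_l2norm in blast)

lemma l2_cmult: "l2 x \<Longrightarrow> l2 (\<lambda>n. a * x n)"
  using l2_mult_bounded[of x "\<lambda>_. a" "cmod a"] by simp

lemma l2_diff: "l2 x \<Longrightarrow> l2 y \<Longrightarrow> l2 (\<lambda>n. x n - y n)"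
  using l2_add[of x "\<lambda>n. (-1) * y n"] l2_cmult[of y "-1"] by simp

lemma l2_sum: "finite K \<Longrightarrow> (\<And>k. k \<in> K \<Longrightarrow> l2 (f k)) \<Longrightarrow> l2 (\<lambda>n. \<Sum>k\<in>K. f k n)"
proof (induction K rule: finite_induct)
  case empty
  thus ?case using l2_zero by simp
next
  case (insert k K)
  thus ?case using l2_add[of "f k" "\<lambda>n. \<Sum>k\<in>K. f k n"] by simp
qed

lemma L2_set_le_l2norm: "l2 x \<Longrightarrow> finite F \<Longrightarrow> L2_set (\<lambda>n. cmod (x n)) F \<le> l2norm x"
  unfolding L2_set_def using sum_le_l2norm_squared l2norm_nonneg
  by (metis real_sqrt_abs real_sqrt_le_mono abs_of_nonneg)

lemma l2norm_triangle:
  assumes "l2 x" "l2 y"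
  shows "l2norm (\<lambda>n. x n + y n) \<le> l2norm x + l2norm y"
proof (rule l2norm_leI)
  show "l2 (\<lambda>n. x n + y n)" using assms by (rule l2_add)
  show "0 \<le> l2norm x + l2norm y" by (simp add: l2norm_nonneg add_nonneg_nonneg)
  fix F :: "int set" assume F: "finite F"
  have "L2_set (\<lambda>n. cmod (x n + y n)) F \<le> L2_set (\<lambda>n. cmod (x n) + cmod (y n)) F"
    by (rule L2_set_mono) (auto simp: norm_triangle_ineq)
  also have "\<dots> \<le> L2_set (\<lambda>n. cmod (x n)) F + L2_set (\<lambda>n. cmod (y n)) F"
    by (rule L2_set_triangle_ineq)
  also have "\<dots> \<le> l2norm x + l2norm y"
    using L2_set_le_l2norm[OF _ F] assms by (simp add: add_mono)
  finally show "(\<Sum>n\<in>F. (cmod (x n + y n))\<^sup>2) \<le> (l2norm x + l2norm y)\<^sup>2"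
    unfolding L2_set_def by (rule sqrt_le_D)
qed

lemma l2_pointwise_limit:
  assumes lim: "\<And>m. (\<lambda>n. X n m) \<longlonglongrightarrow> x m" and X: "\<And>n. l2 (X n)" "\<And>n. l2norm (X n) \<le> R"
  shows "l2 x" "l2norm x \<le> R"
proof -
  have R: "0 \<le> R" using X(2)[of 0] l2norm_nonneg order_trans by blast
  have sums: "(\<Sum>m\<in>F. (cmod (x m))\<^sup>2) \<le> R\<^sup>2" if F: "finite F" for F
  proof (rule LIMSEQ_le_const2)
    show "(\<lambda>n. \<Sum>m\<in>F. (cmod (X n m))\<^sup>2) \<longlonglongrightarrow> (\<Sum>m\<in>F. (cmod (x m))\<^sup>2)"
      by (intro tendsto_intros lim)
    have "(\<Sum>m\<in>F. (cmod (X n m))\<^sup>2) \<le> R\<^sup>2" for n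
      using sum_le_l2norm_squared[OF X(1) F, of n] power_mono[OF X(2) l2norm_nonneg, of n 2]
      by (rule order_trans)
    thus "\<exists>N. \<forall>n\<ge>N. (\<Sum>m\<in>F. (cmod (X n m))\<^sup>2) \<le> R\<^sup>2" by blast
  qed
  thus "l2 x" by (rule l2I)
  thus "l2norm x \<le> R" using l2norm_leI R sums by blast
qed

lemma l2norm_tail_small:
  assumes x: "l2 x" and e: "0 < \<epsilon>"
  shows "\<exists>N::nat. l2norm (\<lambda>m. if \<bar>m\<bar> \<le> int N then 0 else x m) \<le> \<epsilon>"
proof -
  have "((\<lambda>n. (cmod (x n))\<^sup>2) has_sum (l2norm x)\<^sup>2) UNIV"
    using x by (simp add: l2_def l2norm_squared)
  moreover have "(l2norm x)\<^sup>2 - \<epsilon>\<^sup>2 < (l2norm x)\<^sup>2" using e by simp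
  ultimately have "\<forall>\<^sub>F F in finite_subsets_at_top UNIV. (l2norm x)\<^sup>2 - \<epsilon>\<^sup>2 < (\<Sum>n\<in>F. (cmod (x n))\<^sup>2)"
    unfolding has_sum_def by (rule order_tendstoD(1))
  then obtain F where F: "finite F" "(l2norm x)\<^sup>2 - \<epsilon>\<^sup>2 < (\<Sum>n\<in>F. (cmod (x n))\<^sup>2)"
    unfolding eventually_finite_subsets_at_top by blast
  define N where "N = nat (Max (insert 0 (abs ` F)))"
  have window: "\<bar>m\<bar> \<le> int N" if "m \<in> F" for m
    using Max_ge[of "insert 0 (abs ` F)" "\<bar>m\<bar>"] F(1) that unfolding N_def by auto
  define t where "t = (\<lambda>m. if \<bar>m\<bar> \<le> int N then 0 else x m)"
  have "t = (\<lambda>m. (if \<bar>m\<bar> \<le> int N then 0 else 1) * x m)" by (auto simp: t_def)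
  hence "l2 t" using l2_mult_bounded[OF x, of _ 1] by simp
  have "l2norm t \<le> \<epsilon>"
  proof (rule l2norm_leI[OF \<open>l2 t\<close>])
    show "0 \<le> \<epsilon>" using e by simp
    fix G :: "int set" assume G: "finite G"
    have "(\<Sum>m\<in>G. (cmod (t m))\<^sup>2) = (\<Sum>m\<in>G - F. (cmod (t m))\<^sup>2)"
      using G window by (intro sum.mono_neutral_right) (auto simp: t_def)
    also have "\<dots> \<le> (\<Sum>m\<in>G - F. (cmod (x m))\<^sup>2)" by (intro sum_mono) (simp add: t_def)
    also have "\<dots> = (\<Sum>m\<in>(G - F) \<union> F. (cmod (x m))\<^sup>2) - (\<Sum>m\<in>F. (cmod (x m))\<^sup>2)"
      using G F(1) by (subst sum.union_disjoint) auto
    also have "\<dots> \<le> \<epsilon>\<^sup>2"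
      using sum_le_l2norm_squared[OF x, of "(G - F) \<union> F"] G F by simp
    finally show "(\<Sum>m\<in>G. (cmod (t m))\<^sup>2) \<le> \<epsilon>\<^sup>2" .
  qed
  thus ?thesis unfolding t_def by blast
qed

definition delta :: "int \<Rightarrow> int \<Rightarrow> complex" where
  "delta k = (\<lambda>n. if n = k then 1 else 0)"

lemma l2_delta: "l2 (delta k)" and l2norm_delta: "l2norm (delta k) = 1"
proof -
  have "(cmod (delta k n))\<^sup>2 = (if n = k then 1 else 0)" for n by (simp add: delta_def)
  hence sums: "(\<Sum>n\<in>F. (cmod (delta k n))\<^sup>2) = (if k \<in> F then 1 else 0)" if "finite F" for F
    using that by simp
  show l2: "l2 (delta k)" by (rule l2I[of _ 1]) (simp add: sums)
  have "l2norm (delta k) \<le> 1" by (rule l2norm_leI[OF l2]) (auto simp: sums)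
  moreover have "1 \<le> l2norm (delta k)" using norm_le_l2norm[OF l2, of k] by (simp add: delta_def)
  ultimately show "l2norm (delta k) = 1" by simp
qed

lemma l2_invertible_lower_bound:
  assumes "l2_invertible T"
  obtains C where "0 \<le> C" "\<And>x. l2 x \<Longrightarrow> l2norm x \<le> C * l2norm (T x)"
proof -
  obtain C where "\<And>x. l2 x \<Longrightarrow> l2norm x \<le> C * l2norm (T x)"
    using assms by (auto simp: l2_invertible_def)
  hence "\<And>x. l2 x \<Longrightarrow> l2norm x \<le> max C 0 * l2norm (T x)"
    by (meson l2norm_nonneg max.cobounded1 mult_right_mono order_trans)
  thus ?thesis using that[of "max C 0"] by simp
qed

lemma l2_invertible_inverse:
  assumes "l2_invertible T" "l2 y"
  shows "l2 (inv_into l2_space T y)" "T (inv_into l2_space T y) = y"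
proof -
  have "y \<in> T ` l2_space"
    using assms bij_betw_imp_surj_on by (fastforce simp: l2_invertible_def l2_space_def)
  thus "l2 (inv_into l2_space T y)" "T (inv_into l2_space T y) = y"
    using inv_into_into[of y T l2_space] f_inv_into_f[of y T l2_space] by (auto simp: l2_space_def)
qed

lemma l2_invertibleI:
  assumes maps: "\<And>x. l2 x \<Longrightarrow> l2 (T x)"
    and diff: "\<And>x y. T (\<lambda>n. x n - y n) = (\<lambda>n. T x n - T y n)"
    and onto: "\<And>y. l2 y \<Longrightarrow> \<exists>x. l2 x \<and> T x = y"
    and lower: "\<And>x. l2 x \<Longrightarrow> l2norm x \<le> C * l2norm (T x)"
  shows "l2_invertible T"
proof -
  have "inj_on T l2_space"
  proof (rule inj_onI)
    fix x y assume "x \<in> l2_space" "y \<in> l2_space" "T x = T y"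
    hence "l2 (\<lambda>n. x n - y n)" "T (\<lambda>n. x n - y n) = (\<lambda>_. 0)"
      by (auto simp: l2_space_def diff intro: l2_diff)
    hence "l2norm (\<lambda>n. x n - y n) \<le> 0" using lower[of "\<lambda>n. x n - y n"] by (simp add: l2norm_zero)
    hence "cmod (x n - y n) \<le> 0" for n
      using norm_le_l2norm[OF \<open>l2 (\<lambda>n. x n - y n)\<close>, of n] by linarith
    thus "x = y" by (intro ext) simp
  qed
  moreover have "T ` l2_space = l2_space"
  proof
    show "T ` l2_space \<subseteq> l2_space" using maps by (auto simp: l2_space_def)
    show "l2_space \<subseteq> T ` l2_space"
    proof
      fix y assume "y \<in> l2_space"
      then obtain x where "l2 x" "T x = y" using onto by (auto simp: l2_space_def)
      thus "y \<in> T ` l2_space" by (auto simp: l2_space_def)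
    qed
  qed
  ultimately show ?thesis using lower by (auto simp: l2_invertible_def bij_betw_def)
qed

lemma l2_opnorm_le:
  assumes "\<And>x. l2 x \<Longrightarrow> l2norm x \<le> 1 \<Longrightarrow> l2norm (A x) \<le> R"
  shows "l2_opnorm A \<le> R"
  unfolding l2_opnorm_def using assms l2_zero l2norm_zero by (intro cSup_least) force+

lemma l2norm_inverse_le_opnorm:
  assumes inv: "l2_invertible T" and y: "l2 y" "l2norm y \<le> 1"
  shows "l2norm (inv_into l2_space T y) \<le> l2_opnorm (inv_into l2_space T)"
proof -
  obtain C where C: "0 \<le> C" "\<And>x. l2 x \<Longrightarrow> l2norm x \<le> C * l2norm (T x)"
    using l2_invertible_lower_bound[OF inv] by blast
  have "l2norm (inv_into l2_space T w) \<le> C" if "l2 w" "l2norm w \<le> 1" for w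
    using C(2)[of "inv_into l2_space T w"] l2_invertible_inverse[OF inv \<open>l2 w\<close>]
      mult_left_mono[OF \<open>l2norm w \<le> 1\<close> C(1)] by simp
  hence "bdd_above {l2norm (inv_into l2_space T x) |x. l2 x \<and> l2norm x \<le> 1}"
    by (intro bdd_aboveI[of _ C]) blast
  thus ?thesis unfolding l2_opnorm_def using y by (intro cSup_upper) blast+
qed

lemma bounded_seq_pointwise_convergent_subseq:
  fixes X :: "nat \<Rightarrow> 'i::countable \<Rightarrow> complex"
  assumes "\<And>n m. cmod (X n m) \<le> R"
  obtains l r where "strict_mono r" "\<And>m. (\<lambda>n. X (r n) m) \<longlonglongrightarrow> l m"
proof -
  define S where "S = PiE (UNIV :: 'i set) (\<lambda>_. cball (0::complex) R)"
  have "compactin (product_topology (\<lambda>_. euclidean) UNIV) S"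
    unfolding S_def by (subst compactin_PiE) auto
  hence "compact S" by (simp add: euclidean_product_topology)
  hence "seq_compact S" by (rule compact_imp_seq_compact)
  moreover have "\<forall>n. X n \<in> S" using assms by (auto simp: S_def)
  ultimately obtain l r where r: "strict_mono r" and lim: "(X \<circ> r) \<longlonglongrightarrow> l"
    by (rule seq_compactE)
  have "(\<lambda>n. X (r n) m) \<longlonglongrightarrow> l m" for m
  proof -
    have "isCont (\<lambda>x. x m) l"
      using continuous_on_eq_continuous_at[OF open_UNIV, of "\<lambda>x. x m"] by auto
    from isCont_tendsto_compose[OF this lim] show ?thesis by (simp add: o_def)
  qed
  with r show ?thesis by (rule that)
qed

(* Tested on translates of a unit vector, commutation with S forces each diagonal a k of a
   band operator to be constant. *)
lemma band_op_commuting_with_shift_is_convolution: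
  assumes "band_op L" and comm: "\<forall>x. l2 x \<longrightarrow> L (shift x) = shift (L x)"
  obtains K \<alpha> where "finite K" "\<And>x n. L x n = (\<Sum>k\<in>K. \<alpha> k * x (n - k))"
proof -
  obtain w :: nat and a :: "int \<Rightarrow> int \<Rightarrow> complex" where
    L: "L = (\<lambda>x n. \<Sum>k\<in>{- int w..int w}. mult_op (a k) (shift_pow k x) n)"
    using assms(1) unfolding band_op_def by blast
  define K where "K = {- int w..int w}"
  have L_conv: "L x n = (\<Sum>k\<in>K. a k n * x (n - k))" for x n
    by (simp add: L K_def mult_op_def shift_pow_def)
  have L_delta: "L (delta j) n = (if n - j \<in> K then a (n - j) n else 0)" for j n
  proof -
    have "L (delta j) n = (\<Sum>k\<in>K. if k = n - j then a k n else 0)"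
      unfolding L_conv delta_def by (rule sum.cong) auto
    also have "\<dots> = (if n - j \<in> K then a (n - j) n else 0)"
      by (rule sum.delta) (simp add: K_def)
    finally show ?thesis .
  qed
  have step: "a k n = a k (n - 1)" if "k \<in> K" for k n
  proof -
    have "delta (n - k) = shift (delta (n - 1 - k))" by (auto simp: shift_def delta_def)
    hence "L (delta (n - k)) = shift (L (delta (n - 1 - k)))"
      using comm l2_delta by simp
    hence "L (delta (n - k)) n = L (delta (n - 1 - k)) (n - 1)" by (simp add: shift_def)
    thus ?thesis using that by (simp add: L_delta)
  qed
  have const: "a k n = a k 0" if "k \<in> K" for k n
  proof (induction n rule: int_induct[of _ 0])
    case (step1 i)
    have "a k (i + 1) = a k i" using step[OF that, of "i + 1"] by simp
    also have "\<dots> = a k 0" by (rule step1(2))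
    finally show ?case .
  next
    case (step2 i)
    have "a k (i - 1) = a k i" using step[OF that, of i] by (rule sym)
    also have "\<dots> = a k 0" by (rule step2(2))
    finally show ?case .
  qed (rule refl)
  have "finite K" by (simp add: K_def)
  moreover have "L x n = (\<Sum>k\<in>K. a k 0 * x (n - k))" for x n
    unfolding L_conv by (rule sum.cong) (simp_all add: const[of _ n])
  ultimately show ?thesis by (rule that)
qed

lemma subwords_window_occurs:
  assumes "subwords b \<subseteq> subwords c"
  shows "\<exists>s. \<forall>m. \<bar>m\<bar> \<le> int N \<longrightarrow> c (m + s) = b m"
proof -
  have "map (\<lambda>i. b (- int N + int i)) [0..<2*N+1] \<in> subwords b"
    unfolding subwords_def by blast
  with assms obtain k n
    where kn: "map (\<lambda>i. b (- int N + int i)) [0..<2*N+1] = map (\<lambda>i. c (k + int i)) [0..<n]"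
    unfolding subwords_def by blast
  hence "n = 2*N+1" by (metis length_map length_upt minus_nat.diff_0)
  hence eq: "b (- int N + int i) = c (k + int i)" if "i < 2*N+1" for i
    using arg_cong[OF kn, of "\<lambda>l. l ! i"] that by (simp del: upt_Suc)
  show ?thesis
  proof (intro exI[of _ "k + int N"] allI impI)
    fix m :: int assume m: "\<bar>m\<bar> \<le> int N"
    define i where "i = nat (m + int N)"
    have "i < 2*N+1" "int i = m + int N" using m unfolding i_def by linarith+
    from eq[OF this(1)] this(2) show "c (m + (k + int N)) = b m" by (simp add: algebra_simps)
  qed
qed

(* H(u) - z, with L the convolution by \<alpha> on the finite set K. *)
definition H_conv :: "(int \<Rightarrow> complex) \<Rightarrow> int set \<Rightarrow> int \<Rightarrow> (int \<Rightarrow> complex) \<Rightarrow> complex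
    \<Rightarrow> (int \<Rightarrow> complex) \<Rightarrow> int \<Rightarrow> complex" where
  "H_conv \<alpha> K \<gamma> u z x = (\<lambda>n. (\<Sum>k\<in>K. \<alpha> k * x (n - k)) + u (n - \<gamma>) * x (n - \<gamma>) - z * x n)"

lemma l2_H_conv:
  assumes "finite K" "\<And>n. cmod (u n) \<le> M" "l2 x"
  shows "l2 (H_conv \<alpha> K \<gamma> u z x)"
proof -
  have "l2 (\<lambda>n. \<Sum>k\<in>K. \<alpha> k * x (n - k))"
    using assms(1,3) l2_shift_pow_iff by (intro l2_sum l2_cmult) (auto simp: shift_pow_def)
  moreover have "l2 (\<lambda>n. u (n - \<gamma>) * x (n - \<gamma>))"
    using l2_mult_bounded[OF assms(3,2)] l2_shift_pow_iff[of \<gamma> "\<lambda>n. u n * x n"]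
    by (simp add: shift_pow_def)
  ultimately show ?thesis unfolding H_conv_def by (intro l2_diff l2_add l2_cmult assms(3))
qed

lemma H_conv_diff:
  "H_conv \<alpha> K \<gamma> u z (\<lambda>n. x n - y n) = (\<lambda>n. H_conv \<alpha> K \<gamma> u z x n - H_conv \<alpha> K \<gamma> u z y n)"
  by (simp add: H_conv_def algebra_simps sum_subtractf)

lemma H_conv_translate:
  "H_conv \<alpha> K \<gamma> (\<lambda>m. u (m + s)) z x = shift_pow (- s) (H_conv \<alpha> K \<gamma> u z (shift_pow s x))"
  by (simp add: H_conv_def shift_pow_def algebra_simps)

lemma H_conv_diff_coeffs:
  "(\<lambda>n. H_conv \<alpha> K \<gamma> u z x n - H_conv \<alpha> K \<gamma> v z x n) = shift_pow \<gamma> (\<lambda>m. (u m - v m) * x m)"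
  by (simp add: H_conv_def shift_pow_def algebra_simps)

lemma H_conv_eq_at: "u (p - \<gamma>) = v (p - \<gamma>) \<Longrightarrow> H_conv \<alpha> K \<gamma> u z x p = H_conv \<alpha> K \<gamma> v z x p"
  by (simp add: H_conv_def)

lemma H_conv_pointwise_tendsto:
  "(\<And>m. (\<lambda>n. X n m) \<longlonglongrightarrow> x m) \<Longrightarrow> (\<lambda>n. H_conv \<alpha> K \<gamma> u z (X n) p) \<longlonglongrightarrow> H_conv \<alpha> K \<gamma> u z x p"
  unfolding H_conv_def by (intro tendsto_intros)

section \<open>Transfer from c to b\<close>

locale subword_inclusion =
  fixes \<alpha> :: "int \<Rightarrow> complex" and K :: "int set" and \<gamma> :: int and b c :: "int \<Rightarrow> complex"
    and M :: real
  assumes finite_K: "finite K"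
    and b_bounded: "\<And>n. cmod (b n) \<le> M" and c_bounded: "\<And>n. cmod (c n) \<le> M"
    and subwords_incl: "subwords b \<subseteq> subwords c"
begin

lemma H_conv_translate_approx:
  assumes x: "l2 x" and e: "0 < \<epsilon>"
  shows "\<exists>s. l2norm (\<lambda>n. H_conv \<alpha> K \<gamma> (\<lambda>m. c (m + s)) z x n - H_conv \<alpha> K \<gamma> b z x n) \<le> \<epsilon>"
proof -
  have M: "0 \<le> M" using b_bounded[of 0] norm_ge_zero order_trans by blast
  have "0 < \<epsilon> / (2 * M + 1)" using e M by simp
  then obtain N where tail: "l2norm (\<lambda>m. if \<bar>m\<bar> \<le> int N then 0 else x m) \<le> \<epsilon> / (2 * M + 1)"
    using l2norm_tail_small[OF x] by blast
  obtain s where s: "\<And>m. \<bar>m\<bar> \<le> int N \<Longrightarrow> c (m + s) = b m"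
    using subwords_window_occurs[OF subwords_incl] by blast
  define t where "t = (\<lambda>m. if \<bar>m\<bar> \<le> int N then 0 else x m)"
  have "t = (\<lambda>m. (if \<bar>m\<bar> \<le> int N then 0 else 1) * x m)" by (auto simp: t_def)
  hence "l2 t" using l2_mult_bounded[OF x, of _ 1] by simp
  have diff_bounded: "cmod (c (m + s) - b m) \<le> 2 * M" for m
    using norm_triangle_ineq4[of "c (m + s)" "b m"] b_bounded[of m] c_bounded[of "m + s"] by linarith
  have "(\<lambda>n. H_conv \<alpha> K \<gamma> (\<lambda>m. c (m + s)) z x n - H_conv \<alpha> K \<gamma> b z x n)
      = shift_pow \<gamma> (\<lambda>m. (c (m + s) - b m) * t m)"
    unfolding H_conv_diff_coeffs t_def using s by (intro arg_cong[where f = "shift_pow \<gamma>"]) auto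
  hence "l2norm (\<lambda>n. H_conv \<alpha> K \<gamma> (\<lambda>m. c (m + s)) z x n - H_conv \<alpha> K \<gamma> b z x n) \<le> 2 * M * l2norm t"
    using l2norm_mult_bounded[OF \<open>l2 t\<close> diff_bounded] by (simp add: l2norm_shift_pow)
  also have "\<dots> \<le> 2 * M * (\<epsilon> / (2 * M + 1))" using tail M unfolding t_def by (intro mult_left_mono) auto
  also have "\<dots> \<le> \<epsilon>" using e M by (simp add: field_simps)
  finally show ?thesis by blast
qed

lemma H_conv_translate_transfer:
  assumes x: "l2 x" and e: "0 < \<epsilon>"
  shows "\<exists>y. l2 y \<and> l2norm y = l2norm x \<and>
    l2norm (H_conv \<alpha> K \<gamma> c z y) \<le> l2norm (H_conv \<alpha> K \<gamma> b z x) + \<epsilon>"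
proof -
  obtain s where s: "l2norm (\<lambda>n. H_conv \<alpha> K \<gamma> (\<lambda>m. c (m + s)) z x n - H_conv \<alpha> K \<gamma> b z x n) \<le> \<epsilon>"
    using H_conv_translate_approx[OF x e] by blast
  define y where "y = shift_pow s x"
  have "l2norm (H_conv \<alpha> K \<gamma> c z y) = l2norm (H_conv \<alpha> K \<gamma> (\<lambda>m. c (m + s)) z x)"
    by (simp add: H_conv_translate y_def l2norm_shift_pow)
  also have "H_conv \<alpha> K \<gamma> (\<lambda>m. c (m + s)) z x = (\<lambda>n. H_conv \<alpha> K \<gamma> b z x n
      + (H_conv \<alpha> K \<gamma> (\<lambda>m. c (m + s)) z x n - H_conv \<alpha> K \<gamma> b z x n))"
    by simp
  also have "l2norm \<dots> \<le> l2norm (H_conv \<alpha> K \<gamma> b z x)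
      + l2norm (\<lambda>n. H_conv \<alpha> K \<gamma> (\<lambda>m. c (m + s)) z x n - H_conv \<alpha> K \<gamma> b z x n)"
    by (intro l2norm_triangle l2_diff l2_H_conv[OF finite_K b_bounded x]
        l2_H_conv[OF finite_K c_bounded[of "_ + s"] x])
  also have "\<dots> \<le> l2norm (H_conv \<alpha> K \<gamma> b z x) + \<epsilon>" using s by simp
  finally show ?thesis using x by (intro exI[of _ y]) (simp add: y_def l2_shift_pow_iff l2norm_shift_pow)
qed

lemma H_conv_lower_bound_transfer:
  assumes C: "0 \<le> C"
    and lower: "\<And>y. l2 y \<Longrightarrow> l2norm y = l2norm x \<Longrightarrow> r \<le> C * l2norm (H_conv \<alpha> K \<gamma> c z y)"
    and x: "l2 x"
  shows "r \<le> C * l2norm (H_conv \<alpha> K \<gamma> b z x)"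
proof (rule field_le_epsilon)
  fix e :: real assume "0 < e"
  hence "0 < e / (C + 1)" using C by simp
  then obtain y where y: "l2 y" "l2norm y = l2norm x"
      "l2norm (H_conv \<alpha> K \<gamma> c z y) \<le> l2norm (H_conv \<alpha> K \<gamma> b z x) + e / (C + 1)"
    using H_conv_translate_transfer[OF x] by blast
  have "r \<le> C * (l2norm (H_conv \<alpha> K \<gamma> b z x) + e / (C + 1))"
    using lower[OF y(1,2)] mult_left_mono[OF y(3) C] by (rule order_trans)
  also have "\<dots> = C * l2norm (H_conv \<alpha> K \<gamma> b z x) + e * (C / (C + 1))"
    by (simp add: algebra_simps)
  also have "e * (C / (C + 1)) \<le> e" using \<open>0 < e\<close> C by (intro mult_left_le) auto
  finally show "r \<le> C * l2norm (H_conv \<alpha> K \<gamma> b z x) + e" by simp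
qed

lemma H_conv_solvable_transfer:
  assumes y: "l2 y"
    and solvable: "\<And>w. l2 w \<Longrightarrow> l2norm w = l2norm y \<Longrightarrow>
      \<exists>v. l2 v \<and> H_conv \<alpha> K \<gamma> c z v = w \<and> l2norm v \<le> R"
  shows "\<exists>x. l2 x \<and> H_conv \<alpha> K \<gamma> b z x = y \<and> l2norm x \<le> R"
proof -
  obtain S where S: "\<And>N m. \<bar>m\<bar> \<le> int N \<Longrightarrow> c (m + S N) = b m"
    using subwords_window_occurs[OF subwords_incl] by metis
  have "\<exists>v. l2 v \<and> H_conv \<alpha> K \<gamma> c z v = shift_pow (S n) y \<and> l2norm v \<le> R" for n
    by (rule solvable) (simp_all add: y l2_shift_pow_iff l2norm_shift_pow)
  then obtain V where V: "\<And>n. l2 (V n)" "\<And>n. H_conv \<alpha> K \<gamma> c z (V n) = shift_pow (S n) y"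
      "\<And>n. l2norm (V n) \<le> R"
    by metis
  define X where "X n = shift_pow (- S n) (V n)" for n
  have X: "l2 (X n)" "l2norm (X n) \<le> R" for n
    using V by (simp_all add: X_def l2_shift_pow_iff l2norm_shift_pow)
  have X_solves: "H_conv \<alpha> K \<gamma> (\<lambda>m. c (m + S n)) z (X n) = y" for n
    by (simp add: H_conv_translate X_def V(2) shift_pow_shift_pow shift_pow_0)
  have "cmod (X n m) \<le> R" for n m using norm_le_l2norm[OF X(1)] X(2) by (rule order_trans)
  then obtain l r where r: "strict_mono r" and lim: "\<And>m. (\<lambda>n. X (r n) m) \<longlonglongrightarrow> l m"
    using bounded_seq_pointwise_convergent_subseq[of X R] by blast
  have "H_conv \<alpha> K \<gamma> b z l p = y p" for p
  proof (rule LIMSEQ_unique)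
    show "(\<lambda>n. H_conv \<alpha> K \<gamma> b z (X (r n)) p) \<longlonglongrightarrow> H_conv \<alpha> K \<gamma> b z l p"
      using lim by (rule H_conv_pointwise_tendsto)
    have "H_conv \<alpha> K \<gamma> b z (X (r n)) p = y p" if "nat \<bar>p - \<gamma>\<bar> \<le> n" for n
    proof -
      have "\<bar>p - \<gamma>\<bar> \<le> int (r n)" using seq_suble[OF r, of n] that by linarith
      hence "H_conv \<alpha> K \<gamma> b z (X (r n)) p = H_conv \<alpha> K \<gamma> (\<lambda>m. c (m + S (r n))) z (X (r n)) p"
        by (intro H_conv_eq_at) (simp add: S)
      thus ?thesis by (simp add: X_solves)
    qed
    thus "(\<lambda>n. H_conv \<alpha> K \<gamma> b z (X (r n)) p) \<longlonglongrightarrow> y p"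
      by (intro tendsto_eventually eventually_sequentiallyI)
  qed
  thus ?thesis using l2_pointwise_limit[OF lim X] by blast
qed

lemma H_conv_invertible_transfer:
  assumes inv: "l2_invertible (H_conv \<alpha> K \<gamma> c z)"
  shows "l2_invertible (H_conv \<alpha> K \<gamma> b z)"
proof -
  obtain C where C: "0 \<le> C" "\<And>x. l2 x \<Longrightarrow> l2norm x \<le> C * l2norm (H_conv \<alpha> K \<gamma> c z x)"
    using l2_invertible_lower_bound[OF inv] by blast
  show ?thesis
  proof (rule l2_invertibleI)
    show "l2 (H_conv \<alpha> K \<gamma> b z x)" if "l2 x" for x using l2_H_conv[OF finite_K b_bounded that] .
    show "H_conv \<alpha> K \<gamma> b z (\<lambda>n. x n - y n) = (\<lambda>n. H_conv \<alpha> K \<gamma> b z x n - H_conv \<alpha> K \<gamma> b z y n)"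
      for x y by (rule H_conv_diff)
    show "l2norm x \<le> C * l2norm (H_conv \<alpha> K \<gamma> b z x)" if "l2 x" for x
    proof (rule H_conv_lower_bound_transfer[OF C(1) _ that])
      fix v assume "l2 v" "l2norm v = l2norm x"
      thus "l2norm x \<le> C * l2norm (H_conv \<alpha> K \<gamma> c z v)" using C(2)[of v] by simp
    qed
    show "\<exists>x. l2 x \<and> H_conv \<alpha> K \<gamma> b z x = y" if "l2 y" for y
    proof -
      have "\<exists>v. l2 v \<and> H_conv \<alpha> K \<gamma> c z v = w \<and> l2norm v \<le> C * l2norm y"
        if "l2 w" "l2norm w = l2norm y" for w
        using C(2)[of "inv_into l2_space (H_conv \<alpha> K \<gamma> c z) w"] l2_invertible_inverse[OF inv \<open>l2 w\<close>] that
        by (intro exI[of _ "inv_into l2_space (H_conv \<alpha> K \<gamma> c z) w"]) simp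
      thus ?thesis using H_conv_solvable_transfer[OF \<open>l2 y\<close>] by blast
    qed
  qed
qed

lemma H_conv_inverse_opnorm_transfer:
  assumes inv: "l2_invertible (H_conv \<alpha> K \<gamma> c z)"
  shows "l2_opnorm (inv_into l2_space (H_conv \<alpha> K \<gamma> b z))
    \<le> l2_opnorm (inv_into l2_space (H_conv \<alpha> K \<gamma> c z))"
proof (rule l2_opnorm_le)
  let ?R = "l2_opnorm (inv_into l2_space (H_conv \<alpha> K \<gamma> c z))"
  fix y assume y: "l2 y" "l2norm y \<le> 1"
  have "\<exists>v. l2 v \<and> H_conv \<alpha> K \<gamma> c z v = w \<and> l2norm v \<le> ?R"
    if "l2 w" "l2norm w = l2norm y" for w
    using l2_invertible_inverse[OF inv \<open>l2 w\<close>] l2norm_inverse_le_opnorm[OF inv \<open>l2 w\<close>] that y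
    by (intro exI[of _ "inv_into l2_space (H_conv \<alpha> K \<gamma> c z) w"]) simp
  then obtain x where x: "l2 x" "H_conv \<alpha> K \<gamma> b z x = y" "l2norm x \<le> ?R"
    using H_conv_solvable_transfer[OF y(1)] by blast
  have "bij_betw (H_conv \<alpha> K \<gamma> b z) l2_space l2_space"
    using H_conv_invertible_transfer[OF inv] by (simp add: l2_invertible_def)
  hence "inv_into l2_space (H_conv \<alpha> K \<gamma> b z) y = x"
    using x by (intro inv_into_f_eq) (auto simp: bij_betw_def l2_space_def)
  thus "l2norm (inv_into l2_space (H_conv \<alpha> K \<gamma> b z) y) \<le> ?R" using x(3) by simp
qed

lemma inv_norm_H_conv_transfer:
  "inv_norm (H_conv \<alpha> K \<gamma> b z) \<le> inv_norm (H_conv \<alpha> K \<gamma> c z)"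
  using H_conv_invertible_transfer H_conv_inverse_opnorm_transfer by (simp add: inv_norm_def)

lemma lower_norm_H_conv_transfer:
  "lower_norm (H_conv \<alpha> K \<gamma> c z) \<le> lower_norm (H_conv \<alpha> K \<gamma> b z)"
  unfolding lower_norm_def
proof (rule cInf_greatest)
  let ?c_values = "{l2norm (H_conv \<alpha> K \<gamma> c z x) |x. l2 x \<and> l2norm x = 1}"
  show "{l2norm (H_conv \<alpha> K \<gamma> b z x) |x. l2 x \<and> l2norm x = 1} \<noteq> {}"
    using l2_delta l2norm_delta by blast
  have "bdd_below ?c_values" by (rule bdd_belowI[of _ 0]) (auto simp: l2norm_nonneg)
  hence c_lower: "Inf ?c_values \<le> l2norm (H_conv \<alpha> K \<gamma> c z y)" if "l2 y" "l2norm y = 1" for y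
    using that by (intro cInf_lower) auto
  fix v assume "v \<in> {l2norm (H_conv \<alpha> K \<gamma> b z x) |x. l2 x \<and> l2norm x = 1}"
  then obtain x where x: "l2 x" "l2norm x = 1" "v = l2norm (H_conv \<alpha> K \<gamma> b z x)" by blast
  have "Inf ?c_values \<le> 1 * l2norm (H_conv \<alpha> K \<gamma> b z x)"
    by (rule H_conv_lower_bound_transfer[OF _ _ x(1)]) (use c_lower x(2) in auto)
  thus "Inf ?c_values \<le> v" using x(3) by simp
qed

end

theorem theorem4p3:
  fixes \<Sigma> :: "complex set" and L :: "(int \<Rightarrow> complex) \<Rightarrow> (int \<Rightarrow> complex)"
    and \<gamma> :: int and b c :: "int \<Rightarrow> complex"
  assumes "\<Sigma> \<noteq> {}" and "compact \<Sigma>"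
    and "band_op L"
    and "\<forall>x. l2 x \<longrightarrow> L (shift x) = shift (L x)"
    and "\<forall>n. b n \<in> \<Sigma>" and "\<forall>n. c n \<in> \<Sigma>"
    and "subwords b \<subseteq> subwords c"
  shows "lower_norm (H_op L \<gamma> b) \<ge> lower_norm (H_op L \<gamma> c) \<and>
      (\<forall>z. inv_norm (op_minus_scalar (H_op L \<gamma> b) z)
              \<le> inv_norm (op_minus_scalar (H_op L \<gamma> c) z)) \<and>
      spectrum_l2 (H_op L \<gamma> b) \<subseteq> spectrum_l2 (H_op L \<gamma> c) \<and>
      (\<forall>\<epsilon>>0. pseudospectrum_l2 \<epsilon> (H_op L \<gamma> b) \<subseteq> pseudospectrum_l2 \<epsilon> (H_op L \<gamma> c))"
proof -
  obtain K \<alpha> where K: "finite K" and L: "\<And>x n. L x n = (\<Sum>k\<in>K. \<alpha> k * x (n - k))"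
    using band_op_commuting_with_shift_is_convolution[OF assms(3,4)] by metis
  obtain M where M: "\<And>w. w \<in> \<Sigma> \<Longrightarrow> cmod w \<le> M"
    using compact_imp_bounded[OF assms(2)] unfolding bounded_iff by blast
  have "cmod (b n) \<le> M" "cmod (c n) \<le> M" for n using M assms(5,6) by simp_all
  with K assms(7) interpret subword_inclusion \<alpha> K \<gamma> b c M by unfold_locales
  have H_minus: "op_minus_scalar (H_op L \<gamma> u) z = H_conv \<alpha> K \<gamma> u z" for u z
    by (intro ext) (simp add: op_minus_scalar_def H_op_def H_conv_def L shift_pow_def mult_op_def)
  have H: "H_op L \<gamma> u = H_conv \<alpha> K \<gamma> u 0" for u
    by (intro ext) (simp add: H_op_def H_conv_def L shift_pow_def mult_op_def)
  show ?thesis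
  proof (intro conjI allI impI)
    show "lower_norm (H_op L \<gamma> c) \<le> lower_norm (H_op L \<gamma> b)"
      using lower_norm_H_conv_transfer by (simp add: H)
    show "inv_norm (op_minus_scalar (H_op L \<gamma> b) z) \<le> inv_norm (op_minus_scalar (H_op L \<gamma> c) z)"
      for z using inv_norm_H_conv_transfer by (simp add: H_minus)
    show "spectrum_l2 (H_op L \<gamma> b) \<subseteq> spectrum_l2 (H_op L \<gamma> c)"
      unfolding spectrum_l2_def H_minus using H_conv_invertible_transfer by blast
    show "pseudospectrum_l2 \<epsilon> (H_op L \<gamma> b) \<subseteq> pseudospectrum_l2 \<epsilon> (H_op L \<gamma> c)" for \<epsilon>
      unfolding pseudospectrum_l2_def H_minus
      by (auto intro: order.strict_trans2[OF _ inv_norm_H_conv_transfer])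
  qed
qed

end
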